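(* Let $V_-\in\mathbb C(x)$, $\lambda_1\in\mathbb C$, and let $\Psi_{\lambda_1}$ be a nonzero solution of $-\partial_x^2\Psi+V_-\Psi=\lambda_1\Psi$ with $W:=-\partial_x(\ln\Psi_{\lambda_1})$ algebraic over $\mathbb C(x)$; let $V_+=V_--2\partial_x^2(\ln\Psi_{\lambda_1})$ (so that $V_\mp-\lambda_1=W^2\mp\partial_xW$). Then the following are equivalent: (i) $W\in\mathbb C(x)$; (ii) $V_+\in\mathbb C(x)$ and, for every $\lambda\ne\lambda_1$, the Picard–Vessiot extensions over $\mathbb C(x)$ of $-\partial_x^2\Psi+V_-\Psi=\lambda\Psi$ and of $-\partial_x^2\Psi+V_+\Psi=\lambda\Psi$ coincide.
   Context: Condition (ii) is what the paper calls the Darboux transformation being strong iso-Galoisian: same base field and same Picard–Vessiot extensions. *)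

theory Defs
  imports "HOL-Computational_Algebra.Polynomial"
begin

text \<open>Differential algebra inside an ambient differential field of type 'a
  with derivation D.\<close>

definition derivation :: "('a::field \<Rightarrow> 'a) \<Rightarrow> bool" where
  "derivation D \<longleftrightarrow> (\<forall>a b. D (a + b) = D a + D b \<and> D (a * b) = D a * b + a * D b)"

definition subfield :: "'a::field set \<Rightarrow> bool" where
  "subfield E \<longleftrightarrow> 0 \<in> E \<and> 1 \<in> E \<and>
     (\<forall>a\<in>E. \<forall>b\<in>E. a + b \<in> E \<and> a - b \<in> E \<and> a * b \<in> E) \<and> (\<forall>a\<in>E. inverse a \<in> E)"

definition diff_subfield :: "('a::field \<Rightarrow> 'a) \<Rightarrow> 'a set \<Rightarrow> bool" where
  "diff_subfield D E \<longleftrightarrow> subfield E \<and> (\<forall>a\<in>E. D a \<in> E)"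

definition diff_closure :: "('a::field \<Rightarrow> 'a) \<Rightarrow> 'a set \<Rightarrow> 'a set" where
  "diff_closure D S = \<Inter>{E. diff_subfield D E \<and> S \<subseteq> E}"

text \<open>The field C(x) inside the ambient field: quotients of polynomials in x with
  complex coefficients, the complex numbers being embedded via iota.\<close>
definition poly_eval :: "(complex \<Rightarrow> 'a::field) \<Rightarrow> complex poly \<Rightarrow> 'a \<Rightarrow> 'a" where
  "poly_eval \<iota> p x = (\<Sum>i\<le>degree p. \<iota> (coeff p i) * x ^ i)"

definition ratfun_field :: "(complex \<Rightarrow> 'a::field) \<Rightarrow> 'a \<Rightarrow> 'a set" where
  "ratfun_field \<iota> x = {poly_eval \<iota> p x / poly_eval \<iota> q x | p q. poly_eval \<iota> q x \<noteq> 0}"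

definition algebraic_over :: "'a::field set \<Rightarrow> 'a \<Rightarrow> bool" where
  "algebraic_over K w \<longleftrightarrow> (\<exists>p::'a poly. p \<noteq> 0 \<and> (\<forall>i. coeff p i \<in> K) \<and> poly p w = 0)"

definition schr_sol :: "('a::field \<Rightarrow> 'a) \<Rightarrow> 'a \<Rightarrow> 'a \<Rightarrow> 'a \<Rightarrow> bool" where
  "schr_sol D V lam y \<longleftrightarrow> - D (D y) + V * y = lam * y"

definition wronskian :: "('a::field \<Rightarrow> 'a) \<Rightarrow> 'a \<Rightarrow> 'a \<Rightarrow> 'a" where
  "wronskian D y1 y2 = y1 * D y2 - D y1 * y2"

definition PV_ext :: "('a::field \<Rightarrow> 'a) \<Rightarrow> 'a set \<Rightarrow> 'a \<Rightarrow> 'a \<Rightarrow> 'a set \<Rightarrow> bool" where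
  "PV_ext D K V lam E \<longleftrightarrow>
     (\<exists>y1 y2. schr_sol D V lam y1 \<and> schr_sol D V lam y2 \<and> wronskian D y1 y2 \<noteq> 0 \<and>
        E = diff_closure D (K \<union> {y1, y2}) \<and>
        {c \<in> E. D c = 0} = {c \<in> K. D c = 0})"

end

theory Submission
  imports Defs
begin

(* Write V_- = Vm, V_+ = Vp and W = -Psi'/Psi.  The Riccati equation for W gives
   Vm = W^2 - W' + lam1 and Vp = W^2 + W' + lam1.  The proof rests on three facts.
   (1) Rational functions in x over the constants form a differential subfield K
       of the ambient field, and it coincides with C(x) = ratfun_field iota x.
   (2) Darboux transfer: for lam <> lam1 the map y |-> y' + W y sends solutions of
       the Vm-equation to solutions of the Vp-equation, multiplies Wronskians by
       lam - lam1 and can be inverted over K<W>.  Hence, when W lies in K, it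
       preserves Picard-Vessiot extensions of K; replacing W by -W gives the
       converse direction.  This is (i) => (ii).
   (3) If W^2 and W' lie in K, so does W, as W = (W^2)'/(2 W') unless W is a
       constant.  Since W' = (Vp - Vm)/2 and W^2 = (Vm + Vp)/2 - lam1, already
       the rationality of Vp forces W into K.  This is (ii) => (i). *)

section \<open>Derivations and their constants\<close>

lemma derivation_add: "derivation D \<Longrightarrow> D (a + b) = D a + D b"
  by (simp add: derivation_def)

lemma derivation_mult: "derivation D \<Longrightarrow> D (a * b) = D a * b + a * D b"
  by (simp add: derivation_def)

lemma derivation_zero: "derivation D \<Longrightarrow> D 0 = 0"
  using derivation_add[of D 0 0] by (metis add.right_neutral add_left_cancel)

lemma derivation_minus: "derivation D \<Longrightarrow> D (- a) = - D a"
  using derivation_add[of D a "- a"] derivation_zero[of D] by (metis add.right_inverse minus_unique)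

lemma derivation_diff: "derivation D \<Longrightarrow> D (a - b) = D a - D b"
  using derivation_add[of D a "- b"] derivation_minus[of D b] by simp

lemma derivation_divide:
  assumes "derivation D" and "b \<noteq> 0"
  shows "D (a / b) = (D a * b - a * D b) / (b * b)"
proof -
  have "D a = D ((a / b) * b)" using assms(2) by simp
  also have "\<dots> = D (a / b) * b + (a / b) * D b" by (rule derivation_mult[OF assms(1)])
  finally show ?thesis using assms(2) by (simp add: field_simps)
qed

text \<open>One, finite sums of constants and the natural numbers are constants of a
  derivation; this makes polynomials with constant coefficients closed under
  products and formal differentiation.\<close>
lemma constant_one: "derivation D \<Longrightarrow> D 1 = 0"
  using derivation_mult[of D 1 1] by (simp only: mult_1 mult_1_right add_cancel_right_right)

lemma constants_sum:
  "derivation D \<Longrightarrow> (\<And>i. i \<in> A \<Longrightarrow> D (f i) = 0) \<Longrightarrow> D (sum f A) = 0"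
  by (induction A rule: infinite_finite_induct) (simp_all add: derivation_zero derivation_add)

lemma constant_of_nat: "derivation D \<Longrightarrow> D (of_nat n) = 0"
  by (induction n) (simp_all add: derivation_zero derivation_add constant_one)

section \<open>Differential subfields\<close>

lemma diff_subfield_closed:
  assumes "diff_subfield D E"
  shows "0 \<in> E" "1 \<in> E" "a \<in> E \<Longrightarrow> b \<in> E \<Longrightarrow> a + b \<in> E"
    "a \<in> E \<Longrightarrow> b \<in> E \<Longrightarrow> a - b \<in> E" "a \<in> E \<Longrightarrow> b \<in> E \<Longrightarrow> a * b \<in> E"
    "a \<in> E \<Longrightarrow> b \<in> E \<Longrightarrow> a / b \<in> E" "a \<in> E \<Longrightarrow> D a \<in> E"
  using assms by (auto simp: diff_subfield_def subfield_def divide_inverse)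

lemma diff_closure_diff_subfield: "diff_subfield D (diff_closure D S)"
  unfolding diff_closure_def diff_subfield_def subfield_def by auto

lemma diff_closure_superset: "S \<subseteq> diff_closure D S"
  unfolding diff_closure_def by auto

lemma diff_closure_least: "diff_subfield D E \<Longrightarrow> S \<subseteq> E \<Longrightarrow> diff_closure D S \<subseteq> E"
  unfolding diff_closure_def by auto

lemma diff_closure_eqI:
  assumes "S \<subseteq> diff_closure D T" and "T \<subseteq> diff_closure D S"
  shows "diff_closure D S = diff_closure D T"
  using assms by (intro equalityI diff_closure_least diff_closure_diff_subfield)

text \<open>Key step of (ii) \<Longrightarrow> (i): an element whose square and derivative lie in
  a differential subfield containing all constants lies in it itself, because
  (W^2)' = 2 W W'.\<close>
lemma mem_of_square_and_derivative:
  fixes D :: "'a::field \<Rightarrow> 'a"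
  assumes d: "derivation D" and K: "diff_subfield D K"
    and constants_in: "{c. D c = 0} \<subseteq> K" and two: "(2::'a) \<noteq> 0"
    and sq: "W * W \<in> K" and dW: "D W \<in> K"
  shows "W \<in> K"
proof (cases "D W = 0")
  case True
  then show ?thesis using constants_in by auto
next
  case False
  have "D (W * W) = 2 * W * D W" using derivation_mult[OF d, of W W] by simp
  then have "W = D (W * W) / (2 * D W)" using False two by (simp add: field_simps)
  moreover have "2 \<in> K"
    using diff_subfield_closed(1-3)[OF K] by (metis one_add_one)
  ultimately show ?thesis
    using diff_subfield_closed(5-7)[OF K] sq dW by metis
qed

section \<open>The Darboux transformation\<close>

lemma riccati_factorization:
  assumes d: "derivation D" and nz: "\<Psi> \<noteq> 0" and sol: "schr_sol D Vm l1 \<Psi>"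
    and W: "W = - (D \<Psi> / \<Psi>)"
  shows "Vm = W * W - D W + l1" and "Vm - 2 * D (D \<Psi> / \<Psi>) = W * W + D W + l1"
proof -
  have DD: "D (D \<Psi>) = (Vm - l1) * \<Psi>"
    using sol unfolding schr_sol_def by (simp add: algebra_simps)
  have "D (D \<Psi> / \<Psi>) = (D (D \<Psi>) * \<Psi> - D \<Psi> * D \<Psi>) / (\<Psi> * \<Psi>)"
    using derivation_divide[OF d nz] .
  also have "\<dots> = (Vm - l1) - W * W"
    unfolding DD W using nz by (simp add: field_simps)
  finally have log: "D (D \<Psi> / \<Psi>) = (Vm - l1) - W * W" .
  then have "D W = W * W - (Vm - l1)"
    unfolding W derivation_minus[OF d] by simp
  then show "Vm = W * W - D W + l1" and "Vm - 2 * D (D \<Psi> / \<Psi>) = W * W + D W + l1"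
    using log by simp_all
qed

lemma darboux_intertwining:
  assumes d: "derivation D" and V: "V = W * W - D W + l1" and sol: "schr_sol D V l y"
  shows "D (D y + W * y) = W * (D y + W * y) + (l1 - l) * y"
proof -
  have "D (D y) = (V - l) * y" using sol unfolding schr_sol_def by (simp add: algebra_simps)
  then show ?thesis using d V by (simp add: derivation_add derivation_mult algebra_simps)
qed

lemma darboux_solution:
  assumes d: "derivation D" and V: "V = W * W - D W + l1" and U: "U = W * W + D W + l1"
    and sol: "schr_sol D V l y" and const: "D l = 0" "D l1 = 0"
  shows "schr_sol D U l (D y + W * y)"
proof -
  define z where "z = D y + W * y"
  have dz: "D z = W * z + (l1 - l) * y"
    unfolding z_def by (rule darboux_intertwining[OF d V sol])
  have dy: "D y = z - W * y" by (simp add: z_def)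
  have "D (D z) = D (W * z + (l1 - l) * y)" by (simp only: dz)
  also have "\<dots> = D W * z + W * D z + (l1 - l) * D y"
    using d const by (simp add: derivation_add derivation_mult derivation_diff)
  also have "\<dots> = (D W + W * W + (l1 - l)) * z"
    unfolding dz dy by (simp add: algebra_simps)
  finally show ?thesis unfolding schr_sol_def z_def[symmetric] U by (simp add: algebra_simps)
qed

text \<open>The transform multiplies Wronskians by l - l1; so away from
  the level l1 it maps fundamental systems to fundamental systems.\<close>
lemma darboux_wronskian:
  assumes d: "derivation D" and V: "V = W * W - D W + l1"
    and sol1: "schr_sol D V l y1" and sol2: "schr_sol D V l y2"
  shows "wronskian D (D y1 + W * y1) (D y2 + W * y2) = (l - l1) * wronskian D y1 y2"
  unfolding wronskian_def darboux_intertwining[OF d V sol1] darboux_intertwining[OF d V sol2]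
  by (simp add: algebra_simps)

text \<open>The transformed solutions generate the same
  field since y = (z' - W z)/(l1 - l).\<close>
lemma PV_ext_darboux:
  assumes d: "derivation D" and K: "diff_subfield D K" and WK: "W \<in> K"
    and l1K: "l1 \<in> K" and lK: "l \<in> K" and ne: "l \<noteq> l1" and const: "D l = 0" "D l1 = 0"
    and V: "V = W * W - D W + l1" and U: "U = W * W + D W + l1"
    and PV: "PV_ext D K V l E"
  shows "PV_ext D K U l E"
proof -
  obtain y1 y2 where sol1: "schr_sol D V l y1" and sol2: "schr_sol D V l y2"
    and wr: "wronskian D y1 y2 \<noteq> 0" and E: "E = diff_closure D (K \<union> {y1, y2})"
    and cst: "{c \<in> E. D c = 0} = {c \<in> K. D c = 0}"
    using PV unfolding PV_ext_def by blast
  define z1 where "z1 = D y1 + W * y1"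
  define z2 where "z2 = D y2 + W * y2"
  have wz: "wronskian D z1 z2 \<noteq> 0"
    using darboux_wronskian[OF d V sol1 sol2] wr ne unfolding z1_def z2_def by simp
  let ?S = "diff_closure D (K \<union> {y1, y2})" and ?T = "diff_closure D (K \<union> {z1, z2})"
  have S: "diff_subfield D ?S" and T: "diff_subfield D ?T"
    by (rule diff_closure_diff_subfield)+
  have KS: "K \<union> {y1, y2} \<subseteq> ?S" and KT: "K \<union> {z1, z2} \<subseteq> ?T"
    by (rule diff_closure_superset)+
  have recover: "y \<in> ?T" if "z \<in> ?T" and "D z = W * z + (l1 - l) * y" for y z
  proof -
    have "y = (D z - W * z) / (l1 - l)" using that(2) ne by (simp add: field_simps)
    also have "\<dots> \<in> ?T"
      using that(1) KT l1K lK WK by (intro diff_subfield_closed(4-7)[OF T]; auto)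
    finally show ?thesis .
  qed
  have "z1 \<in> ?S" "z2 \<in> ?S"
    unfolding z1_def z2_def using KS WK by (intro diff_subfield_closed(3,5,7)[OF S]; auto)+
  moreover have "y1 \<in> ?T" "y2 \<in> ?T"
    using recover KT darboux_intertwining[OF d V sol1] darboux_intertwining[OF d V sol2]
    unfolding z1_def z2_def by auto
  ultimately have "?S = ?T" using KS KT by (intro diff_closure_eqI) auto
  moreover have "schr_sol D U l z1" "schr_sol D U l z2"
    unfolding z1_def z2_def using darboux_solution[OF d V U _ const] sol1 sol2 by blast+
  ultimately show ?thesis unfolding PV_ext_def using wz cst E by blast
qed

section \<open>Rational functions over the constants\<close>

text \<open>Polynomials whose coefficients lie in C, and the quotients of their values
  at x; for C the constants and x' = 1 these are the rational functions.\<close>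
definition poly_over :: "'a::field set \<Rightarrow> 'a poly set" where
  "poly_over C = {P. \<forall>i. coeff P i \<in> C}"

definition ratfun_over :: "'a::field set \<Rightarrow> 'a \<Rightarrow> 'a set" where
  "ratfun_over C x = {poly P x / poly Q x | P Q. P \<in> poly_over C \<and> Q \<in> poly_over C \<and> poly Q x \<noteq> 0}"

lemma ratfun_overI:
  "P \<in> poly_over C \<Longrightarrow> Q \<in> poly_over C \<Longrightarrow> poly Q x \<noteq> 0 \<Longrightarrow> a = poly P x / poly Q x
   \<Longrightarrow> a \<in> ratfun_over C x"
  unfolding ratfun_over_def by blast

context
  fixes D :: "'a::field \<Rightarrow> 'a"
  assumes d: "derivation D"
begin

lemma poly_over_constants_closed:
  assumes "P \<in> poly_over {c. D c = 0}" and "Q \<in> poly_over {c. D c = 0}"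
  shows "P + Q \<in> poly_over {c. D c = 0}" "P - Q \<in> poly_over {c. D c = 0}"
    "P * Q \<in> poly_over {c. D c = 0}" "pderiv P \<in> poly_over {c. D c = 0}"
proof -
  have P: "D (coeff P i) = 0" and Q: "D (coeff Q i) = 0" for i
    using assms by (auto simp: poly_over_def)
  show "P + Q \<in> poly_over {c. D c = 0}"
    using P Q d by (simp add: poly_over_def derivation_add)
  show "P - Q \<in> poly_over {c. D c = 0}"
    using P Q d by (simp add: poly_over_def derivation_diff)
  show "P * Q \<in> poly_over {c. D c = 0}"
    unfolding poly_over_def mem_Collect_eq
  proof
    fix n show "D (coeff (P * Q) n) = 0"
      unfolding coeff_mult by (rule constants_sum[OF d]) (simp add: derivation_mult[OF d] P Q)
  qed
  show "pderiv P \<in> poly_over {c. D c = 0}"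
    using P d by (simp add: poly_over_def coeff_pderiv derivation_mult constant_of_nat del: of_nat_Suc)
qed

lemma constant_poly_over: "D c = 0 \<Longrightarrow> [:c:] \<in> poly_over {c. D c = 0}"
  using d by (auto simp: poly_over_def coeff_pCons derivation_zero split: nat.splits)

lemma derivation_poly:
  assumes x: "D x = 1"
  shows "P \<in> poly_over {c. D c = 0} \<Longrightarrow> D (poly P x) = poly (pderiv P) x"
proof (induction P rule: pCons_induct)
  case 0
  then show ?case using derivation_zero[OF d] by simp
next
  case (pCons a p)
  have coeffs: "D (coeff (pCons a p) i) = 0" for i
    using pCons.prems by (simp add: poly_over_def)
  have Da: "D a = 0" using coeffs[of 0] by simp
  have p: "p \<in> poly_over {c. D c = 0}"
    unfolding poly_over_def using coeffs[of "Suc i" for i] by simp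
  show ?case using pCons.IH[OF p] Da x d
    by (simp add: pderiv_pCons derivation_add derivation_mult algebra_simps)
qed

lemma constant_ratfun_over:
  assumes "D c = 0" shows "c \<in> ratfun_over {c. D c = 0} x"
  by (rule ratfun_overI[OF constant_poly_over[OF assms] constant_poly_over[OF constant_one[OF d]]])
    simp_all

lemma ratfun_over_derivative:
  assumes x: "D x = 1" and a: "a \<in> ratfun_over {c. D c = 0} x"
  shows "D a \<in> ratfun_over {c. D c = 0} x"
proof -
  obtain P Q where A: "P \<in> poly_over {c. D c = 0}" "Q \<in> poly_over {c. D c = 0}" "poly Q x \<noteq> 0"
      "a = poly P x / poly Q x"
    using a unfolding ratfun_over_def by blast
  have "D a = (poly (pderiv P) x * poly Q x - poly P x * poly (pderiv Q) x) / (poly Q x * poly Q x)"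
    using A derivation_divide[OF d] derivation_poly[OF x] by simp
  then show ?thesis using A poly_over_constants_closed
    by (intro ratfun_overI[of "pderiv P * Q - P * pderiv Q" _ "Q * Q"]) auto
qed

lemma ratfun_over_diff_subfield:
  assumes x: "D x = 1"
  shows "diff_subfield D (ratfun_over {c. D c = 0} x)"
  unfolding diff_subfield_def subfield_def
proof (intro conjI ballI)
  let ?C = "{c. D c = 0}" and ?K = "ratfun_over {c. D c = 0} x"
  show "0 \<in> ?K" "1 \<in> ?K"
    using constant_ratfun_over derivation_zero[OF d] constant_one[OF d] by auto
  fix a b assume "a \<in> ?K" "b \<in> ?K"
  then obtain P Q P' Q' where A: "P \<in> poly_over ?C" "Q \<in> poly_over ?C" "poly Q x \<noteq> 0"
      "a = poly P x / poly Q x"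
    and B: "P' \<in> poly_over ?C" "Q' \<in> poly_over ?C" "poly Q' x \<noteq> 0" "b = poly P' x / poly Q' x"
    unfolding ratfun_over_def by blast
  note closed = poly_over_constants_closed
  have nz: "poly (Q * Q') x \<noteq> 0" using A B by simp
  have sum: "a + b = poly (P * Q' + P' * Q) x / poly (Q * Q') x"
    unfolding A(4) B(4) using A(3) B(3) by (simp add: field_simps)
  show "a + b \<in> ?K" by (rule ratfun_overI[OF _ _ nz sum]) (use A B closed in auto)
  have diff: "a - b = poly (P * Q' - P' * Q) x / poly (Q * Q') x"
    unfolding A(4) B(4) using A(3) B(3) by (simp add: field_simps)
  show "a - b \<in> ?K" by (rule ratfun_overI[OF _ _ nz diff]) (use A B closed in auto)
  have prod: "a * b = poly (P * P') x / poly (Q * Q') x"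
    unfolding A(4) B(4) by simp
  show "a * b \<in> ?K" by (rule ratfun_overI[OF _ _ nz prod]) (use A B closed in auto)
next
  let ?C = "{c. D c = 0}" and ?K = "ratfun_over {c. D c = 0} x"
  fix a assume "a \<in> ?K"
  then obtain P Q where A: "P \<in> poly_over ?C" "Q \<in> poly_over ?C" "poly Q x \<noteq> 0"
      "a = poly P x / poly Q x"
    unfolding ratfun_over_def by blast
  show "inverse a \<in> ?K"
  proof (cases "poly P x = 0")
    case True
    then show ?thesis
      using A derivation_zero[OF d] by (intro ratfun_overI[of 0 _ Q]) (auto simp: poly_over_def)
  next
    case False
    then show ?thesis using A by (intro ratfun_overI[of Q _ P]) auto
  qed
  show "D a \<in> ?K" using \<open>a \<in> ?K\<close> by (rule ratfun_over_derivative[OF x])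
qed

end

lemma complex_hom_inj:
  fixes \<iota> :: "complex \<Rightarrow> 'a::field"
  assumes add: "\<And>a b. \<iota> (a + b) = \<iota> a + \<iota> b" and mult: "\<And>a b. \<iota> (a * b) = \<iota> a * \<iota> b"
    and one: "\<iota> 1 = 1"
  shows "inj \<iota>"
proof (rule inj_onI)
  fix a b assume "\<iota> a = \<iota> b"
  then have "\<iota> (a - b) = 0" using add[of "a - b" b] by simp
  then have "\<iota> ((a - b) * inverse (a - b)) = 0" using mult by simp
  then show "a = b" using one by (cases "a = b") auto
qed

lemma ratfun_field_eq_ratfun_over:
  fixes \<iota> :: "complex \<Rightarrow> 'a::field"
  assumes inj: "inj \<iota>" and zero: "\<iota> 0 = 0"
  shows "ratfun_field \<iota> x = ratfun_over (range \<iota>) x"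
proof -
  have eval: "poly_eval \<iota> p x = poly (map_poly \<iota> p) x" for p
  proof -
    have "degree (map_poly \<iota> p) = degree p"
      using inj zero by (intro degree_map_poly) (metis injD)
    then show ?thesis unfolding poly_eval_def poly_altdef by (simp add: coeff_map_poly zero)
  qed
  have over: "P \<in> poly_over (range \<iota>) \<longleftrightarrow> (\<exists>p. P = map_poly \<iota> p)" for P
  proof
    assume "P \<in> poly_over (range \<iota>)"
    moreover have "inv \<iota> 0 = 0" using inj zero by (metis inv_f_f)
    ultimately have "P = map_poly \<iota> (map_poly (inv \<iota>) P)"
      by (intro poly_eqI) (auto simp: coeff_map_poly zero poly_over_def f_inv_into_f)
    then show "\<exists>p. P = map_poly \<iota> p" by blast
  qed (auto simp: poly_over_def coeff_map_poly zero)
  show ?thesis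
    unfolding ratfun_field_def ratfun_over_def eval over by blast
qed

lemma ratfun_field_diff_subfield:
  fixes D :: "'a::field \<Rightarrow> 'a" and \<iota> :: "complex \<Rightarrow> 'a"
  assumes d: "derivation D" and inj: "inj \<iota>" and zero: "\<iota> 0 = 0"
    and constants: "{c. D c = 0} = range \<iota>" and x: "D x = 1"
  shows "diff_subfield D (ratfun_field \<iota> x)" and "{c. D c = 0} \<subseteq> ratfun_field \<iota> x"
proof -
  have K_eq: "ratfun_field \<iota> x = ratfun_over {c. D c = 0} x"
    unfolding constants by (rule ratfun_field_eq_ratfun_over[OF inj zero])
  show "diff_subfield D (ratfun_field \<iota> x)"
    unfolding K_eq by (rule ratfun_over_diff_subfield[OF d x])
  show "{c. D c = 0} \<subseteq> ratfun_field \<iota> x"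
    unfolding K_eq using constant_ratfun_over[OF d] by blast
qed

text \<open>(i) \<Longrightarrow> (ii): if W lies in K, then at every constant level l \<noteq> l1 the
  two equations have the same Picard--Vessiot extensions over K; the inverse
  transformation is the Darboux transformation for -W.\<close>
lemma darboux_strong_iso_galoisian:
  assumes d: "derivation D" and K: "diff_subfield D K" and WK: "W \<in> K"
    and l1: "l1 \<in> K" "D l1 = 0" and l: "l \<in> K" "D l = 0" "l \<noteq> l1"
    and Vm: "Vm = W * W - D W + l1" and Vp: "Vp = W * W + D W + l1"
  shows "PV_ext D K Vm l E \<longleftrightarrow> PV_ext D K Vp l E"
proof -
  have Vm': "Vm = (- W) * (- W) + D (- W) + l1" and Vp': "Vp = (- W) * (- W) - D (- W) + l1"
    using Vm Vp derivation_minus[OF d] by simp_all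
  have minus_WK: "- W \<in> K" using diff_subfield_closed(1,4)[OF K] WK by (metis diff_0)
  show "PV_ext D K Vm l E \<longleftrightarrow> PV_ext D K Vp l E"
    using PV_ext_darboux[OF d K WK l1(1) l(1) l(3) l(2) l1(2) Vm Vp]
      PV_ext_darboux[OF d K minus_WK l1(1) l(1) l(3) l(2) l1(2) Vp' Vm'] by blast
qed

text \<open>(ii) \<Longrightarrow> (i), in fact from the rationality of the partner potential
  alone: W' = (Vp - Vm)/2 and W^2 = (Vm + Vp)/2 - l1 lie in K, hence so does W.\<close>
lemma darboux_partner_in_field:
  fixes D :: "'a::field \<Rightarrow> 'a"
  assumes d: "derivation D" and K: "diff_subfield D K"
    and constants_in: "{c. D c = 0} \<subseteq> K" and two: "(2::'a) \<noteq> 0"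
    and in_K: "Vm \<in> K" "Vp \<in> K" "l1 \<in> K"
    and Vm: "Vm = W * W - D W + l1" and Vp: "Vp = W * W + D W + l1"
  shows "W \<in> K"
proof (rule mem_of_square_and_derivative[OF d K constants_in two])
  have two_K: "2 \<in> K" using diff_subfield_closed(1-3)[OF K] by (metis one_add_one)
  have DW: "D W = (Vp - Vm) / 2" and WW: "W * W = (Vm + Vp - 2 * l1) / 2"
    using Vm Vp two by (simp_all add: field_simps)
  show "D W \<in> K" unfolding DW by (intro diff_subfield_closed(4,6)[OF K] in_K two_K)
  show "W * W \<in> K" unfolding WW by (intro diff_subfield_closed(3-6)[OF K] in_K two_K)
qed

text \<open>The argument does not need the hypotheses that fundamental systems exist
  and that W is algebraic over \<complex>(x); they belong to the setting of the paper.\<close>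
theorem corollary2p2p14:
  fixes D :: "'a::field \<Rightarrow> 'a" and \<iota> :: "complex \<Rightarrow> 'a"
    and x Vm Vp \<Psi> W :: 'a and lam1 :: complex
  assumes deriv: "derivation D"
    and iota_add: "\<And>a b. \<iota> (a + b) = \<iota> a + \<iota> b"
    and iota_mult: "\<And>a b. \<iota> (a * b) = \<iota> a * \<iota> b"
    and iota_one: "\<iota> 1 = 1"
    and constants: "{c. D c = 0} = range \<iota>"
    and Dx: "D x = 1"
    and fundamental: "\<And>lam. \<forall>V\<in>{Vm, Vp}. \<exists>y1 y2. schr_sol D V (\<iota> lam) y1 \<and>
                         schr_sol D V (\<iota> lam) y2 \<and> wronskian D y1 y2 \<noteq> 0"
    and Vm_rat: "Vm \<in> ratfun_field \<iota> x"
    and Psi_nz: "\<Psi> \<noteq> 0"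
    and Psi_sol: "schr_sol D Vm (\<iota> lam1) \<Psi>"
    and W_def: "W = - (D \<Psi> / \<Psi>)"
    and W_alg: "algebraic_over (ratfun_field \<iota> x) W"
    and Vp_def: "Vp = Vm - 2 * D (D \<Psi> / \<Psi>)"
  shows "W \<in> ratfun_field \<iota> x \<longleftrightarrow>
           (Vp \<in> ratfun_field \<iota> x \<and>
            (\<forall>lam. lam \<noteq> lam1 \<longrightarrow>
               (\<forall>E. PV_ext D (ratfun_field \<iota> x) Vm (\<iota> lam) E \<longleftrightarrow>
                    PV_ext D (ratfun_field \<iota> x) Vp (\<iota> lam) E)))"
proof -
  let ?K = "ratfun_field \<iota> x"
  have inj: "inj \<iota>" by (rule complex_hom_inj[OF iota_add iota_mult iota_one])
  have zero: "\<iota> 0 = 0" using iota_add[of 0 0] by (metis add.right_neutral add_left_cancel)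
  have two: "(2::'a) \<noteq> 0"
    using inj_eq[OF inj, of 2 0] zero iota_add[of 1 1] iota_one by simp
  note K = ratfun_field_diff_subfield[OF deriv inj zero constants Dx]
  have const: "D (\<iota> c) = 0" "\<iota> c \<in> ?K" for c using constants K(2) by auto
  have Vm: "Vm = W * W - D W + \<iota> lam1" and Vp: "Vp = W * W + D W + \<iota> lam1"
    using riccati_factorization[OF deriv Psi_nz Psi_sol W_def] Vp_def by simp_all
  have levels: "\<iota> lam \<noteq> \<iota> lam1" if "lam \<noteq> lam1" for lam using that inj by (meson injD)
  show ?thesis
  proof
    assume WK: "W \<in> ?K"
    have "Vp \<in> ?K" unfolding Vp by (intro diff_subfield_closed(3,5,7)[OF K(1)] WK const(2))
    moreover have "PV_ext D ?K Vm (\<iota> lam) E \<longleftrightarrow> PV_ext D ?K Vp (\<iota> lam) E"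
      if "lam \<noteq> lam1" for lam E
      by (rule darboux_strong_iso_galoisian[OF deriv K(1) WK const(2) const(1) const(2) const(1)
            levels[OF that] Vm Vp])
    ultimately show "Vp \<in> ?K \<and> (\<forall>lam. lam \<noteq> lam1 \<longrightarrow>
               (\<forall>E. PV_ext D ?K Vm (\<iota> lam) E \<longleftrightarrow> PV_ext D ?K Vp (\<iota> lam) E))" by blast
  next
    assume "Vp \<in> ?K \<and> (\<forall>lam. lam \<noteq> lam1 \<longrightarrow>
               (\<forall>E. PV_ext D ?K Vm (\<iota> lam) E \<longleftrightarrow> PV_ext D ?K Vp (\<iota> lam) E))"
    then show "W \<in> ?K"
      using darboux_partner_in_field[OF deriv K two Vm_rat _ const(2) Vm Vp] by blast
  qed
qed

end
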